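(* Let $k \in \mathbb{N}$. Every linear $k$-DCFG is equivalent to (i.e. generates the same language as) some $k$-DCFG $G = \langle N, \Sigma, P, S\rangle$ all of whose rules have one of the following forms, where $A, B \in N$ and $u \in \Theta$: (1) $A \to u\cdot B$ or $A \to B \cdot u$, with $|u| \leq 1$ and $u \neq \epsilon$; (2) $A \to B \odot_j u$, with $|u| \leq 1$; (3) $A \to u$, with $|u| \leq 1$.
   Context: Fix a finite alphabet $\Sigma$; $\Sigma^*$ is the set of words over $\Sigma$ and $\epsilon$ the empty word. $\Theta_k$ is the set of tuples $(u_0,\ldots,u_k)$ with $u_i\in\Sigma^*$, and $\Theta=\bigcup_{k\in\mathbb{N}}\Theta_k$; the rank of $(u_0,\ldots,u_k)$ is $k$, and its length $|u|$ is the sum of the lengths of its components. Rank-$0$ tuples are identified with words; in particular $\epsilon$ also denotes the rank-$0$ tuple $(\epsilon)$. Concatenation $\cdot:\Theta_i\times\Theta_j\to\Theta_{i+j}$ is $(x_0,\ldots,x_i)\cdot(y_0,\ldots,y_j)=(x_0,\ldots,x_{i-1},x_iy_0,y_1,\ldots,y_j)$, and for $1\le l\le i$ intercalation $\odot_l:\Theta_i\times\Theta_j\to\Theta_{i+j-1}$ is $(x_0,\ldots,x_i)\odot_l(y_0,\ldots,y_j)=(x_0,\ldots,x_{l-2},x_{l-1}y_0,y_1,\ldots,y_{j-1},y_jx_l,x_{l+1},\ldots,x_i)$. Let $N$ be a finite set of nonterminals disjoint from $\Sigma$ with a rank function $\mathrm{rk}:N\to\mathbb{N}$. The set of $k$-correct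 terms $\mathrm{Tm}_k(N,\Sigma)$ and their ranks are defined inductively: every tuple in $\Theta_j$ with $j\le k$ is a term of rank $j$, and every nonterminal $A$ with $\mathrm{rk}(A)\le k$ is a term of rank $\mathrm{rk}(A)$; if $\alpha,\beta$ are terms with $\mathrm{rk}\,\alpha+\mathrm{rk}\,\beta\le k$ then $(\alpha\cdot\beta)$ is a term of rank $\mathrm{rk}\,\alpha+\mathrm{rk}\,\beta$; if $1\le j\le k$, $\mathrm{rk}\,\alpha\ge j$ and $\mathrm{rk}\,\alpha+\mathrm{rk}\,\beta\le k+1$ then $(\alpha\odot_j\beta)$ is a term of rank $\mathrm{rk}\,\alpha+\mathrm{rk}\,\beta-1$. A ground term is one containing no nonterminals; its value $\nu(\alpha)\in\Theta$ is obtained by interpreting $\cdot$ and $\odot_j$ as the operations above. A context $C[x]$ is a term with one leaf occurrence of a variable $x$ of some rank; $C[\beta]$ is the result of substituting a term $\beta$ of the same rank for $x$. A $k$-displacement context-free grammar ($k$-DCFG) is $G=\langle N,\Sigma,P,S\rangle$ where $S\in N$ has rank $0$ and $P$ is a finite set of rules $A\to\alpha$ with $A\in N$, $\alpha\in\mathrm{Tm}_k(N,\Sigma)$ and $\mathrm{rk}(A)=\mathrm{rk}(\alpha)$. Standing assumption: all tuples occurring as leaves of right-hand sides of rules have length at most $1$. Derivability $\vdash_G$ is the smallest reflexive transitive relation between nonterminals and terms such that $(B\to\beta)\in P$ and $A\vdash_G C[B]$ imply $A\vdash_G C[\beta]$ for any context $C$. $L_G(A)=\{\nu(\alpha)\mid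 A\vdash_G\alpha,\ \alpha \text{ ground}\}$ and $L(G)=L_G(S)$. Two grammars are equivalent if they generate the same language. A term is linear if it contains at most one occurrence of a nonterminal; a grammar is linear if the right-hand sides of all its rules are linear. All right-hand sides in the claim are required to be $k$-correct terms of the same rank as the left-hand side. *)

theory Defs
  imports Main
begin

text \<open>Tuples (u_0,...,u_k) are nonempty lists of words; rank = length - 1.\<close>
type_synonym 't tuple = "'t list list"

definition tup_rank :: "'t tuple \<Rightarrow> nat" where
  "tup_rank u = length u - 1"

definition tup_len :: "'t tuple \<Rightarrow> nat" where
  "tup_len u = sum_list (map length u)"

definition tconc :: "'t tuple \<Rightarrow> 't tuple \<Rightarrow> 't tuple" where
  "tconc x y = butlast x @ [last x @ hd y] @ tl y"

text \<open>Intercalation at position l (1 \<le> l \<le> i):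
  (x_0..x_{l-2}, x_{l-1} y_0, y_1..y_{j-1}, y_j x_l, x_{l+1}..x_i),
  which equals ((x_0..x_{l-1}) . y) . (x_l..x_i).\<close>
definition tinterc :: "nat \<Rightarrow> 't tuple \<Rightarrow> 't tuple \<Rightarrow> 't tuple" where
  "tinterc l x y = tconc (tconc (take l x) y) (drop l x)"

datatype ('n, 't) tm =
    Tup "'t tuple"
  | NT 'n
  | Conc "('n, 't) tm" "('n, 't) tm"
  | Interc nat "('n, 't) tm" "('n, 't) tm"

fun trank :: "('n \<Rightarrow> nat) \<Rightarrow> ('n, 't) tm \<Rightarrow> nat" where
  "trank rk (Tup u) = tup_rank u"
| "trank rk (NT A) = rk A"
| "trank rk (Conc a b) = trank rk a + trank rk b"
| "trank rk (Interc j a b) = trank rk a + trank rk b - 1"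

fun kcorrect :: "nat \<Rightarrow> ('n \<Rightarrow> nat) \<Rightarrow> ('n, 't) tm \<Rightarrow> bool" where
  "kcorrect k rk (Tup u) = (u \<noteq> [] \<and> tup_rank u \<le> k)"
| "kcorrect k rk (NT A) = (rk A \<le> k)"
| "kcorrect k rk (Conc a b) =
     (kcorrect k rk a \<and> kcorrect k rk b \<and> trank rk a + trank rk b \<le> k)"
| "kcorrect k rk (Interc j a b) =
     (kcorrect k rk a \<and> kcorrect k rk b \<and> 1 \<le> j \<and> j \<le> k \<and>
      j \<le> trank rk a \<and> trank rk a + trank rk b \<le> k + 1)"

fun nts :: "('n, 't) tm \<Rightarrow> 'n list" where
  "nts (Tup u) = []"
| "nts (NT A) = [A]"
| "nts (Conc a b) = nts a @ nts b"
| "nts (Interc j a b) = nts a @ nts b"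

fun leaf_tuples :: "('n, 't) tm \<Rightarrow> 't tuple list" where
  "leaf_tuples (Tup u) = [u]"
| "leaf_tuples (NT A) = []"
| "leaf_tuples (Conc a b) = leaf_tuples a @ leaf_tuples b"
| "leaf_tuples (Interc j a b) = leaf_tuples a @ leaf_tuples b"

definition ground :: "('n, 't) tm \<Rightarrow> bool" where
  "ground t \<longleftrightarrow> nts t = []"

text \<open>Value of a ground term (meaningless on nonterminal leaves).\<close>
fun val :: "('n, 't) tm \<Rightarrow> 't tuple" where
  "val (Tup u) = u"
| "val (NT A) = undefined"
| "val (Conc a b) = tconc (val a) (val b)"
| "val (Interc j a b) = tinterc j (val a) (val b)"

record ('n, 't) dcfg =
  Nts :: "'n set"
  rk :: "'n \<Rightarrow> nat"
  Rules :: "('n \<times> ('n, 't) tm) set"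
  Start :: 'n

text \<open>k-DCFG, including the standing assumption on leaf tuples.\<close>
definition is_kDCFG :: "nat \<Rightarrow> ('n, 't) dcfg \<Rightarrow> bool" where
  "is_kDCFG k G \<longleftrightarrow>
     finite (Nts G) \<and> Start G \<in> Nts G \<and> rk G (Start G) = 0 \<and> finite (Rules G) \<and>
     (\<forall>(A, \<alpha>) \<in> Rules G.
        A \<in> Nts G \<and> set (nts \<alpha>) \<subseteq> Nts G \<and> kcorrect k (rk G) \<alpha> \<and>
        rk G A = trank (rk G) \<alpha> \<and>
        (\<forall>u \<in> set (leaf_tuples \<alpha>). tup_len u \<le> 1))"

inductive dstep :: "('n, 't) dcfg \<Rightarrow> ('n, 't) tm \<Rightarrow> ('n, 't) tm \<Rightarrow> bool"
  for G where
  rule: "(B, \<beta>) \<in> Rules G \<Longrightarrow> dstep G (NT B) \<beta>"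
| conc1: "dstep G a a' \<Longrightarrow> dstep G (Conc a b) (Conc a' b)"
| conc2: "dstep G b b' \<Longrightarrow> dstep G (Conc a b) (Conc a b')"
| interc1: "dstep G a a' \<Longrightarrow> dstep G (Interc j a b) (Interc j a' b)"
| interc2: "dstep G b b' \<Longrightarrow> dstep G (Interc j a b) (Interc j a b')"

definition derives :: "('n, 't) dcfg \<Rightarrow> 'n \<Rightarrow> ('n, 't) tm \<Rightarrow> bool" where
  "derives G A \<alpha> \<longleftrightarrow> (dstep G)\<^sup>*\<^sup>* (NT A) \<alpha>"

definition LG :: "('n, 't) dcfg \<Rightarrow> 'n \<Rightarrow> 't tuple set" where
  "LG G A = {val \<alpha> | \<alpha>. derives G A \<alpha> \<and> ground \<alpha>}"

definition lang :: "('n, 't) dcfg \<Rightarrow> 't tuple set" where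
  "lang G = LG G (Start G)"

definition linear_grammar :: "('n, 't) dcfg \<Rightarrow> bool" where
  "linear_grammar G \<longleftrightarrow> (\<forall>(A, \<alpha>) \<in> Rules G. length (nts \<alpha>) \<le> 1)"

text \<open>epsilon as rank-0 tuple is [[]].\<close>
definition normal_rule :: "('n, 't) tm \<Rightarrow> bool" where
  "normal_rule \<alpha> \<longleftrightarrow>
     (\<exists>u B. \<alpha> = Conc (Tup u) (NT B) \<and> tup_len u \<le> 1 \<and> u \<noteq> [[]]) \<or>
     (\<exists>u B. \<alpha> = Conc (NT B) (Tup u) \<and> tup_len u \<le> 1 \<and> u \<noteq> [[]]) \<or>
     (\<exists>u B j. \<alpha> = Interc j (NT B) (Tup u) \<and> tup_len u \<le> 1) \<or>
     (\<exists>u. \<alpha> = Tup u \<and> tup_len u \<le> 1)"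

definition normal_form :: "('n, 't) dcfg \<Rightarrow> bool" where
  "normal_form G \<longleftrightarrow> (\<forall>(A, \<alpha>) \<in> Rules G. normal_rule \<alpha>)"

end

theory Submission
  imports Defs
begin

text \<open>A linear rule \<open>A \<rightarrow> \<beta>\<close> whose right-hand side contains the nonterminal \<open>B\<close> maps the
  value of \<open>B\<close> to the value of \<open>\<beta>\<close> by a composition of concatenations and intercalations
  with constant tuples. Peeling off one letter or one gap of these constants at a time factors
  this map into operations of the normal form (concatenation with, or intercalation of, a tuple of
  length at most 1) whose intermediate ranks never exceed \<open>k\<close>. Replacing every rule by a chain
  of fresh nonterminals carrying these operations gives an equivalent grammar in normal form,
  except that a rule with an empty chain is a unit rule \<open>A \<rightarrow> B\<close>; it is removed by giving \<open>A\<close>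
  the first rule of every chain of \<open>B\<close>. For linear grammars the language is described by
  bottom-up generation, on which the equivalence is checked.\<close>

section \<open>Linear terms and bottom-up generation\<close>

fun val_at :: "('n, 't) tm \<Rightarrow> 't tuple \<Rightarrow> 't tuple" where
  "val_at (Tup u) x = u"
| "val_at (NT A) x = x"
| "val_at (Conc a b) x = tconc (val_at a x) (val_at b x)"
| "val_at (Interc j a b) x = tinterc j (val_at a x) (val_at b x)"

fun plug :: "('n, 't) tm \<Rightarrow> ('n, 't) tm \<Rightarrow> ('n, 't) tm" where
  "plug (Tup u) s = Tup u"
| "plug (NT A) s = s"
| "plug (Conc a b) s = Conc (plug a s) (plug b s)"
| "plug (Interc j a b) s = Interc j (plug a s) (plug b s)"

lemma val_at_ground: "nts t = [] \<Longrightarrow> val_at t x = val t"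
  by (induction t) auto

lemma val_at_plug: "val_at (plug t s) x = val_at t (val_at s x)"
  by (induction t) auto

lemma plug_ground: "nts t = [] \<Longrightarrow> plug t s = t"
  by (induction t) auto

lemma plug_NT_self: "nts t = [B] \<Longrightarrow> plug t (NT B) = t"
  by (induction t) (auto simp: append_eq_Cons_conv plug_ground)

lemma nts_plug: "nts t = [B] \<Longrightarrow> nts (plug t s) = nts s"
  by (induction t) (auto simp: append_eq_Cons_conv plug_ground)

lemma val_plug: "nts t = [B] \<Longrightarrow> nts s = [] \<Longrightarrow> val (plug t s) = val_at t (val s)"
  by (metis nts_plug val_at_ground val_at_plug)

inductive generates :: "('n, 't) dcfg \<Rightarrow> 'n \<Rightarrow> 't tuple \<Rightarrow> bool" for G where
  terminal: "(A, \<beta>) \<in> Rules G \<Longrightarrow> nts \<beta> = [] \<Longrightarrow> generates G A (val \<beta>)"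
| unary: "(A, \<beta>) \<in> Rules G \<Longrightarrow> nts \<beta> = [B] \<Longrightarrow> generates G B x \<Longrightarrow> generates G A (val_at \<beta> x)"

lemma dstep_nts_not_Nil: "dstep G t t' \<Longrightarrow> nts t \<noteq> []"
  by (induction rule: dstep.induct) auto

lemma rtranclp_dstep_ground: "(dstep G)\<^sup>*\<^sup>* t s \<Longrightarrow> nts t = [] \<Longrightarrow> s = t"
  by (induction rule: converse_rtranclp_induct) (auto dest: dstep_nts_not_Nil)

lemma dstep_linear:
  "dstep G t t' \<Longrightarrow> nts t = [B] \<Longrightarrow> \<exists>\<beta>. (B, \<beta>) \<in> Rules G \<and> t' = plug t \<beta>"
  by (induction rule: dstep.induct)
    (auto simp: append_eq_Cons_conv Cons_eq_append_conv plug_ground dest: dstep_nts_not_Nil)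

lemma dstep_plug: "nts t = [B] \<Longrightarrow> dstep G a a' \<Longrightarrow> dstep G (plug t a) (plug t a')"
  by (induction t) (auto simp: append_eq_Cons_conv plug_ground intro: dstep.intros)

lemma rtranclp_dstep_plug:
  "(dstep G)\<^sup>*\<^sup>* a a' \<Longrightarrow> nts t = [B] \<Longrightarrow> (dstep G)\<^sup>*\<^sup>* (plug t a) (plug t a')"
  by (induction rule: rtranclp_induct) (auto intro: rtranclp.rtrancl_into_rtrancl dstep_plug)

lemma rtranclp_dstep_generates:
  assumes "(dstep G)\<^sup>*\<^sup>* t s" "ground s" "nts t = [B]" "linear_grammar G"
  shows "\<exists>x. generates G B x \<and> val s = val_at t x"
  using assms
proof (induction arbitrary: B rule: converse_rtranclp_induct)
  case base
  then show ?case by (simp add: ground_def)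
next
  case (step t t')
  obtain \<beta> where \<beta>: "(B, \<beta>) \<in> Rules G" "t' = plug t \<beta>"
    using dstep_linear[OF step(1,5)] by blast
  have "length (nts \<beta>) \<le> 1"
    using \<beta>(1) \<open>linear_grammar G\<close> by (auto simp: linear_grammar_def)
  then consider "nts \<beta> = []" | C where "nts \<beta> = [C]"
    by (cases "nts \<beta>") auto
  then show ?case
  proof cases
    case 1
    then have "s = t'"
      using rtranclp_dstep_ground step(2) \<beta>(2) nts_plug[OF step(5)] by metis
    then have "val s = val_at t (val \<beta>)"
      using val_plug[OF step(5) 1] \<beta>(2) by simp
    then show ?thesis using generates.terminal[OF \<beta>(1) 1] by blast
  next
    case 2
    then obtain x where "generates G C x" "val s = val_at t' x"
      using step(3)[OF step(4)] nts_plug[OF step(5)] \<beta>(2) step(6) by auto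
    then show ?thesis
      using generates.unary[OF \<beta>(1) 2] \<beta>(2) by (auto simp: val_at_plug)
  qed
qed

lemma generates_derives:
  assumes "generates G A w"
  shows "\<exists>s. derives G A s \<and> ground s \<and> val s = w"
  using assms
proof (induction rule: generates.induct)
  case (terminal A \<beta>)
  then show ?case
    by (auto simp: derives_def ground_def intro: dstep.rule)
next
  case (unary A \<beta> B x)
  then obtain s where s: "derives G B s" "ground s" "val s = x" by blast
  have "(dstep G)\<^sup>*\<^sup>* (plug \<beta> (NT B)) (plug \<beta> s)"
    using s(1) unary(2) by (auto simp: derives_def intro: rtranclp_dstep_plug)
  then have "(dstep G)\<^sup>*\<^sup>* \<beta> (plug \<beta> s)"
    by (simp add: plug_NT_self[OF unary(2)])
  then have "derives G A (plug \<beta> s)"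
    using unary(1) by (auto simp: derives_def intro: converse_rtranclp_into_rtranclp dstep.rule)
  moreover have "ground (plug \<beta> s)" "val (plug \<beta> s) = val_at \<beta> x"
    using s(2,3) nts_plug[OF unary(2)] val_plug[OF unary(2)] by (auto simp: ground_def)
  ultimately show ?case by blast
qed

lemma LG_linear: "linear_grammar G \<Longrightarrow> LG G A = {w. generates G A w}"
  using rtranclp_dstep_generates[of G "NT A"] generates_derives[of G A]
  by (fastforce simp: LG_def derives_def)

section \<open>Identities of tuple operations\<close>

lemma tconc_not_Nil [simp]: "tconc x y \<noteq> []"
  by (simp add: tconc_def)

lemma length_tconc: "x \<noteq> [] \<Longrightarrow> y \<noteq> [] \<Longrightarrow> length (tconc x y) = length x + length y - 1"
  by (cases y) (auto simp: tconc_def)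

lemma tconc_assoc:
  "x \<noteq> [] \<Longrightarrow> y \<noteq> [] \<Longrightarrow> z \<noteq> [] \<Longrightarrow> tconc (tconc x y) z = tconc x (tconc y z)"
  by (cases z; cases y; cases x rule: rev_cases)
    (auto simp: tconc_def butlast_append split: if_splits)

lemma tconc_eps_left: "x \<noteq> [] \<Longrightarrow> tconc [[]] x = x"
  by (cases x) (auto simp: tconc_def)

lemma tconc_eps_right: "x \<noteq> [] \<Longrightarrow> tconc x [[]] = x"
  by (auto simp: tconc_def)

lemma tconc_Nil_Cons: "x \<noteq> [] \<Longrightarrow> tconc x ([] # ys) = x @ ys"
  by (auto simp: tconc_def)

lemma tconc_snoc_Nil: "y \<noteq> [] \<Longrightarrow> tconc (xs @ [[]]) y = xs @ y"
  by (cases y) (auto simp: tconc_def)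

lemma tconc_append_left: "y \<noteq> [] \<Longrightarrow> tconc (xs @ y) z = xs @ tconc y z"
  by (auto simp: tconc_def butlast_append)

lemma length_tinterc:
  "1 \<le> j \<Longrightarrow> j < length x \<Longrightarrow> y \<noteq> [] \<Longrightarrow> length (tinterc j x y) = length x + length y - 2"
proof -
  assume "1 \<le> j" "j < length x" "y \<noteq> []"
  moreover from this have "take j x \<noteq> []" "drop j x \<noteq> []" by auto
  ultimately show ?thesis by (simp add: tinterc_def length_tconc)
qed

lemma tinterc_append: "length xs = j \<Longrightarrow> tinterc j (xs @ ys) v = tconc (tconc xs v) ys"
  by (simp add: tinterc_def)

context
  fixes j :: nat and x :: "'t tuple"
  assumes j: "1 \<le> j" "j < length x"
begin

private lemma take_not_Nil: "take j x \<noteq> []" and drop_not_Nil: "drop j x \<noteq> []"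
  using j by auto

lemma tinterc_tinterc_letter_left:
  assumes "v \<noteq> []"
  shows "tinterc j (tinterc j x [[c], []]) v = tinterc j x (tconc [[c]] v)"
proof -
  have "tinterc j x [[c], []] = tconc (take j x) [[c]] @ drop j x"
    using drop_not_Nil by (simp add: tinterc_def tconc_def butlast_append tconc_snoc_Nil)
  moreover have "length (tconc (take j x) [[c]]) = j"
    using j take_not_Nil by (simp add: length_tconc)
  ultimately have "tinterc j (tinterc j x [[c], []]) v
      = tconc (tconc (tconc (take j x) [[c]]) v) (drop j x)"
    by (simp add: tinterc_append)
  also have "\<dots> = tinterc j x (tconc [[c]] v)"
    using take_not_Nil assms by (simp add: tconc_assoc tinterc_def)
  finally show ?thesis .
qed

lemma tinterc_tinterc_letter_right:
  assumes "v \<noteq> []"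
  shows "tinterc j (tinterc j x [[], [c]]) v = tinterc j x (tconc v [[c]])"
proof -
  have "tinterc j x [[], [c]] = take j x @ tconc [[c]] (drop j x)"
    using take_not_Nil by (simp add: tinterc_def tconc_Nil_Cons tconc_append_left)
  then have "tinterc j (tinterc j x [[], [c]]) v
      = tconc (tconc (take j x) v) (tconc [[c]] (drop j x))"
    using j by (simp add: tinterc_append)
  also have "\<dots> = tinterc j x (tconc v [[c]])"
    using take_not_Nil drop_not_Nil assms by (simp add: tconc_assoc tinterc_def)
  finally show ?thesis .
qed

lemma tinterc_tinterc_gap:
  assumes "v \<noteq> []"
  shows "tinterc (Suc j) (tinterc j x [[], [], []]) v = tinterc j x ([] # v)"
proof -
  have "tinterc j x [[], [], []] = (take j x @ [[]]) @ drop j x"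
    using take_not_Nil tconc_snoc_Nil[OF drop_not_Nil, of "take j x @ [[]]"]
    by (simp add: tinterc_def tconc_Nil_Cons)
  moreover have "tinterc (Suc j) ((take j x @ [[]]) @ drop j x) v
      = tconc (tconc (take j x @ [[]]) v) (drop j x)"
    using j by (intro tinterc_append) simp
  ultimately have "tinterc (Suc j) (tinterc j x [[], [], []]) v = tconc (take j x @ v) (drop j x)"
    using assms by (simp add: tconc_snoc_Nil)
  also have "\<dots> = tinterc j x ([] # v)"
    using take_not_Nil by (simp add: tinterc_def tconc_Nil_Cons)
  finally show ?thesis .
qed

end

lemma trank_le_if_kcorrect: "kcorrect k rh t \<Longrightarrow> trank rh t \<le> k"
  by (induction t) (auto simp: tup_rank_def)

lemma length_val_at:
  "kcorrect k rh t \<Longrightarrow> (\<forall>B \<in> set (nts t). length x = Suc (rh B)) \<Longrightarrow>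
   length (val_at t x) = Suc (trank rh t)"
proof (induction t)
  case (Tup u)
  then show ?case by (auto simp: tup_rank_def)
next
  case (Conc a b)
  then show ?case
    by (auto simp: length_tconc simp flip: length_greater_0_conv)
next
  case (Interc j a b)
  then show ?case
    by (auto simp: length_tinterc simp flip: length_greater_0_conv)
qed auto

lemma length_val: "kcorrect k rh t \<Longrightarrow> nts t = [] \<Longrightarrow> length (val t) = Suc (trank rh t)"
  using length_val_at[of k rh t] val_at_ground[of t] by fastforce

section \<open>Chains of normal-form operations\<close>

text \<open>The right-hand sides \<open>u \<cdot> B\<close>, \<open>B \<cdot> u\<close>, \<open>B \<odot>\<^sub>j u\<close> and \<open>u\<close> of the normal form,
  read as operations on the value of \<open>B\<close>.\<close>
datatype 't nf_op =
  ConcLeft "'t tuple" | ConcRight "'t tuple" | IntercWith nat "'t tuple" | Const "'t tuple"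

fun op_val :: "'t nf_op \<Rightarrow> 't tuple \<Rightarrow> 't tuple" where
  "op_val (ConcLeft u) x = tconc u x"
| "op_val (ConcRight u) x = tconc x u"
| "op_val (IntercWith j u) x = tinterc j x u"
| "op_val (Const u) x = u"

fun op_rank :: "'t nf_op \<Rightarrow> nat \<Rightarrow> nat" where
  "op_rank (ConcLeft u) r = tup_rank u + r"
| "op_rank (ConcRight u) r = tup_rank u + r"
| "op_rank (IntercWith j u) r = r + tup_rank u - 1"
| "op_rank (Const u) r = tup_rank u"

fun op_ok :: "nat \<Rightarrow> 't nf_op \<Rightarrow> nat \<Rightarrow> bool" where
  "op_ok k (ConcLeft u) r \<longleftrightarrow> u \<noteq> [] \<and> u \<noteq> [[]] \<and> tup_len u \<le> 1 \<and> tup_rank u + r \<le> k"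
| "op_ok k (ConcRight u) r \<longleftrightarrow> u \<noteq> [] \<and> u \<noteq> [[]] \<and> tup_len u \<le> 1 \<and> tup_rank u + r \<le> k"
| "op_ok k (IntercWith j u) r \<longleftrightarrow>
     u \<noteq> [] \<and> tup_len u \<le> 1 \<and> 1 \<le> j \<and> j \<le> r \<and> r \<le> k \<and> r + tup_rank u \<le> k + 1"
| "op_ok k (Const u) r \<longleftrightarrow> u \<noteq> [] \<and> tup_len u \<le> 1 \<and> tup_rank u \<le> k"

fun is_Const :: "'t nf_op \<Rightarrow> bool" where
  "is_Const (Const u) = True"
| "is_Const _ = False"

abbreviation ops_val :: "'t nf_op list \<Rightarrow> 't tuple \<Rightarrow> 't tuple" where
  "ops_val os x \<equiv> foldr op_val os x"

abbreviation ops_rank :: "'t nf_op list \<Rightarrow> nat \<Rightarrow> nat" where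
  "ops_rank os r \<equiv> foldr op_rank os r"

fun ops_ok :: "nat \<Rightarrow> 't nf_op list \<Rightarrow> nat \<Rightarrow> bool" where
  "ops_ok k [] r = True"
| "ops_ok k (p # os) r \<longleftrightarrow> op_ok k p (ops_rank os r) \<and> ops_ok k os r"

lemma ops_ok_append: "ops_ok k (os @ os') r \<longleftrightarrow> ops_ok k os (ops_rank os' r) \<and> ops_ok k os' r"
  by (induction os) auto

lemma ops_ok_nth:
  "ops_ok k os r \<Longrightarrow> i < length os \<Longrightarrow> op_ok k (os ! i) (ops_rank (drop (Suc i) os) r)"
  by (induction os arbitrary: i) (auto simp: nth_Cons split: nat.splits)

lemma op_rank_nth_drop:
  "i < length os \<Longrightarrow> op_rank (os ! i) (ops_rank (drop (Suc i) os) r) = ops_rank (drop i os) r"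
  by (induction os arbitrary: i) (auto simp: nth_Cons split: nat.splits)

lemma op_val_nth_drop:
  "i < length os \<Longrightarrow> op_val (os ! i) (ops_val (drop (Suc i) os) x) = ops_val (drop i os) x"
  by (induction os arbitrary: i) (auto simp: nth_Cons split: nat.splits)

lemma length_op_val:
  assumes "op_ok k p r" "length x = Suc r"
  shows "length (op_val p x) = Suc (op_rank p r)"
proof -
  have "x \<noteq> []" using assms(2) by auto
  with assms show ?thesis
    by (cases p) (auto simp: tup_rank_def length_tconc length_tinterc neq_Nil_conv)
qed

lemma length_ops_val:
  "ops_ok k os r \<Longrightarrow> length x = Suc r \<Longrightarrow> length (ops_val os x) = Suc (ops_rank os r)"
  by (induction os) (auto simp: length_op_val)

definition realizes :: "nat \<Rightarrow> 't nf_op list \<Rightarrow> nat \<Rightarrow> ('t tuple \<Rightarrow> 't tuple) \<Rightarrow> bool" where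
  "realizes k os r f \<longleftrightarrow>
     ops_ok k os r \<and> (\<forall>p \<in> set os. \<not> is_Const p) \<and> (\<forall>x. length x = Suc r \<longrightarrow> ops_val os x = f x)"

lemma realizes_Nil: "realizes k [] r (\<lambda>x. x)"
  by (simp add: realizes_def)

lemma realizes_op:
  "op_ok k p r \<Longrightarrow> \<not> is_Const p \<Longrightarrow> (\<And>x. op_val p x = f x) \<Longrightarrow> realizes k [p] r f"
  by (simp add: realizes_def)

lemma realizes_cong:
  "realizes k os r f \<Longrightarrow> (\<And>x. length x = Suc r \<Longrightarrow> f x = g x) \<Longrightarrow> realizes k os r g"
  by (simp add: realizes_def)

lemma realizes_append:
  assumes "realizes k os' (ops_rank os r) g" "realizes k os r f"
  shows "realizes k (os' @ os) r (g \<circ> f)"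
  using assms length_ops_val[of k os r] by (auto simp: realizes_def ops_ok_append)

lemma realizes_ops_rank:
  assumes "realizes k os r f" "\<And>x. length x = Suc r \<Longrightarrow> length (f x) = Suc r'"
  shows "ops_rank os r = r'"
  using assms length_ops_val[of k os r "replicate (Suc r) []"] by (simp add: realizes_def)

lemma ex_realizes_comp:
  assumes "\<exists>os. realizes k os r f" "\<And>x. length x = Suc r \<Longrightarrow> length (f x) = Suc s"
    and "\<exists>os. realizes k os s g"
  shows "\<exists>os. realizes k os r (\<lambda>x. g (f x))"
proof -
  obtain os os' where "realizes k os r f" "realizes k os' s g"
    using assms(1,3) by blast
  moreover from this(1) have "ops_rank os r = s"
    using assms(2) by (rule realizes_ops_rank)
  ultimately have "realizes k (os' @ os) r (g \<circ> f)"
    by (simp add: realizes_append)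
  then show ?thesis by (auto simp: comp_def)
qed

lemma ex_realizes_cong:
  "\<exists>os. realizes k os r f \<Longrightarrow> (\<And>x. length x = Suc r \<Longrightarrow> f x = g x) \<Longrightarrow> \<exists>os. realizes k os r g"
  using realizes_cong by blast

lemma ex_realizes_tconc_left:
  "v \<noteq> [] \<Longrightarrow> tup_rank v + r \<le> k \<Longrightarrow> \<exists>os. realizes k os r (tconc v)"
proof (induction "length v + tup_len v" arbitrary: v rule: less_induct)
  case less
  then obtain w vs where v: "v = w # vs" by (cases v) auto
  show ?case
  proof (cases w)
    case (Cons c w')
    let ?v' = "w' # vs"
    have v': "tconc v x = tconc [[c]] (tconc ?v' x)" for x
      by (cases vs) (simp_all add: v Cons tconc_def)
    obtain os where os: "realizes k os r (tconc ?v')"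
      using less.hyps[of ?v'] less.prems by (auto simp: v Cons tup_len_def tup_rank_def)
    have "ops_rank os r = tup_rank ?v' + r"
      by (rule realizes_ops_rank[OF os])
        (auto simp: length_tconc tup_rank_def simp flip: length_greater_0_conv)
    then have "realizes k [ConcLeft [[c]]] (ops_rank os r) (tconc [[c]])"
      using less.prems by (intro realizes_op) (auto simp: v tup_len_def tup_rank_def)
    from realizes_append[OF this os] have "realizes k ([ConcLeft [[c]]] @ os) r (tconc v)"
      by (rule realizes_cong) (auto simp: v')
    then show ?thesis ..
  next
    case Nil
    show ?thesis
    proof (cases vs)
      case Nil
      have "realizes k [] r (tconc v)"
        by (rule realizes_cong[OF realizes_Nil])
          (auto simp: v \<open>w = []\<close> \<open>vs = []\<close> tconc_eps_left simp flip: length_greater_0_conv)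
      then show ?thesis ..
    next
      case (Cons v1 vs')
      have vs: "tconc v x = tconc [[], []] (tconc vs x)" for x
        by (simp add: v Nil Cons tconc_def)
      obtain os where os: "realizes k os r (tconc vs)"
        using less.hyps[of vs] less.prems by (auto simp: v Nil Cons tup_len_def tup_rank_def)
      have "ops_rank os r = tup_rank vs + r"
        by (rule realizes_ops_rank[OF os])
          (auto simp: Cons length_tconc tup_rank_def simp flip: length_greater_0_conv)
      then have "realizes k [ConcLeft [[], []]] (ops_rank os r) (tconc [[], []])"
        using less.prems by (intro realizes_op) (auto simp: v Nil Cons tup_len_def tup_rank_def)
      from realizes_append[OF this os] have "realizes k ([ConcLeft [[], []]] @ os) r (tconc v)"
        by (rule realizes_cong) (auto simp: vs Cons)
      then show ?thesis ..
    qed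
  qed
qed

lemma ex_realizes_tconc_right:
  "v \<noteq> [] \<Longrightarrow> tup_rank v + r \<le> k \<Longrightarrow> \<exists>os. realizes k os r (\<lambda>x. tconc x v)"
proof (induction "length v + tup_len v" arbitrary: v rule: less_induct)
  case less
  then obtain vs w where v: "v = vs @ [w]" by (cases v rule: rev_cases) auto
  show ?case
  proof (cases w rule: rev_cases)
    case (snoc w' c)
    let ?v' = "vs @ [w']"
    have "v = tconc ?v' [[c]]"
      by (simp add: v snoc tconc_def)
    then have v': "tconc x v = tconc (tconc x ?v') [[c]]" if "x \<noteq> []" for x
      using that by (simp add: tconc_assoc)
    obtain os where os: "realizes k os r (\<lambda>x. tconc x ?v')"
      using less.hyps[of ?v'] less.prems by (auto simp: v snoc tup_len_def tup_rank_def)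
    have "ops_rank os r = tup_rank ?v' + r"
      by (rule realizes_ops_rank[OF os])
        (auto simp: length_tconc tup_rank_def simp flip: length_greater_0_conv)
    then have "realizes k [ConcRight [[c]]] (ops_rank os r) (\<lambda>x. tconc x [[c]])"
      using less.prems by (intro realizes_op) (auto simp: v tup_len_def tup_rank_def)
    from realizes_append[OF this os]
    have "realizes k ([ConcRight [[c]]] @ os) r (\<lambda>x. tconc x v)"
      by (rule realizes_cong) (auto simp: v' simp flip: length_greater_0_conv)
    then show ?thesis ..
  next
    case Nil
    show ?thesis
    proof (cases vs rule: rev_cases)
      case Nil
      have "realizes k [] r (\<lambda>x. tconc x v)"
        by (rule realizes_cong[OF realizes_Nil])
          (auto simp: v \<open>w = []\<close> \<open>vs = []\<close> tconc_eps_right simp flip: length_greater_0_conv)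
      then show ?thesis ..
    next
      case (snoc vs' v1)
      have "v = tconc vs [[], []]"
        by (simp add: v Nil snoc tconc_def)
      then have vs: "tconc x v = tconc (tconc x vs) [[], []]" if "x \<noteq> []" for x
        using that snoc by (simp add: tconc_assoc)
      obtain os where os: "realizes k os r (\<lambda>x. tconc x vs)"
        using less.hyps[of vs] less.prems by (auto simp: v Nil snoc tup_len_def tup_rank_def)
      have "ops_rank os r = tup_rank vs + r"
        by (rule realizes_ops_rank[OF os])
          (auto simp: snoc length_tconc tup_rank_def simp flip: length_greater_0_conv)
      then have "realizes k [ConcRight [[], []]] (ops_rank os r) (\<lambda>x. tconc x [[], []])"
        using less.prems by (intro realizes_op) (auto simp: v Nil snoc tup_len_def tup_rank_def)
      from realizes_append[OF this os]
      have "realizes k ([ConcRight [[], []]] @ os) r (\<lambda>x. tconc x v)"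
        by (rule realizes_cong) (auto simp: vs simp flip: length_greater_0_conv)
      then show ?thesis ..
    qed
  qed
qed

text \<open>Letters are peeled off the two ends of \<open>v\<close>; once both end components are empty,
  the leading gap is split off by intercalating \<open>(\<epsilon>, \<epsilon>, \<epsilon>)\<close>, which raises the rank by one.\<close>
lemma ex_realizes_tinterc:
  "1 \<le> j \<Longrightarrow> j \<le> r \<Longrightarrow> r \<le> k \<Longrightarrow> r + tup_rank v \<le> k + 1 \<Longrightarrow> v \<noteq> [] \<Longrightarrow>
   \<exists>os. realizes k os r (\<lambda>x. tinterc j x v)"
proof (induction "length v + tup_len v" arbitrary: v j r rule: less_induct)
  case less
  show ?case
  proof (cases "tup_len v \<le> 1")
    case True
    with less.prems have "realizes k [IntercWith j v] r (\<lambda>x. tinterc j x v)"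
      by (intro realizes_op) auto
    then show ?thesis ..
  next
    case False
    obtain w vs where v: "v = w # vs" using less.prems by (cases v) auto
    obtain vs0 wl where v_snoc: "v = vs0 @ [wl]" using less.prems by (cases v rule: rev_cases) auto
    consider c w' where "w = c # w'" | c w' where "w = []" "wl = w' @ [c]" | "w = []" "wl = []"
      by (cases w; cases wl rule: rev_cases) auto
    then show ?thesis
    proof cases
      case 1
      let ?v' = "w' # vs"
      have v': "v = tconc [[c]] ?v'"
        by (cases vs) (simp_all add: v 1 tconc_def)
      obtain os where os: "realizes k os r (\<lambda>x. tinterc j x ?v')"
        using less.hyps[of ?v' j r] less.prems by (auto simp: v 1 tup_len_def tup_rank_def)
      have single: "realizes k [IntercWith j [[c], []]] r (\<lambda>x. tinterc j x [[c], []])"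
        using less.prems by (intro realizes_op) (auto simp: tup_len_def tup_rank_def)
      from os have shifted:
        "realizes k os (ops_rank [IntercWith j [[c], []]] r) (\<lambda>x. tinterc j x ?v')"
        using less.prems by (simp add: tup_rank_def)
      from realizes_append[OF shifted single]
      have "realizes k (os @ [IntercWith j [[c], []]]) r (\<lambda>x. tinterc j x v)"
        by (rule realizes_cong)
          (use less.prems in \<open>simp add: v' tinterc_tinterc_letter_left\<close>)
      then show ?thesis ..
    next
      case 2
      let ?v' = "vs0 @ [w']"
      have v': "v = tconc ?v' [[c]]"
        by (simp add: v_snoc 2 tconc_def)
      obtain os where os: "realizes k os r (\<lambda>x. tinterc j x ?v')"
        using less.hyps[of ?v' j r] less.prems by (auto simp: v_snoc 2 tup_len_def tup_rank_def)
      have single: "realizes k [IntercWith j [[], [c]]] r (\<lambda>x. tinterc j x [[], [c]])"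
        using less.prems by (intro realizes_op) (auto simp: tup_len_def tup_rank_def)
      from os have shifted:
        "realizes k os (ops_rank [IntercWith j [[], [c]]] r) (\<lambda>x. tinterc j x ?v')"
        using less.prems by (simp add: tup_rank_def)
      from realizes_append[OF shifted single]
      have "realizes k (os @ [IntercWith j [[], [c]]]) r (\<lambda>x. tinterc j x v)"
        by (rule realizes_cong)
          (use less.prems in \<open>simp add: v' tinterc_tinterc_letter_right\<close>)
      then show ?thesis ..
    next
      case 3
      obtain vs1 where vs1: "vs = vs1 @ [[]]"
        using False v v_snoc 3 by (cases vs rule: rev_cases) (auto simp: tup_len_def)
      have "vs1 \<noteq> []"
        using False \<open>w = []\<close> by (auto simp: v vs1 tup_len_def)
      have rank_v: "tup_rank v = Suc (tup_rank vs)" "1 \<le> tup_rank vs"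
        using v vs1 \<open>vs1 \<noteq> []\<close> by (auto simp: tup_rank_def Suc_le_eq)
      obtain os where os: "realizes k os (Suc r) (\<lambda>x. tinterc (Suc j) x vs)"
        using less.hyps[of vs "Suc j" "Suc r"] less.prems rank_v
        by (auto simp: v vs1 tup_len_def)
      have single: "realizes k [IntercWith j [[], [], []]] r (\<lambda>x. tinterc j x [[], [], []])"
        using less.prems rank_v by (intro realizes_op) (auto simp: tup_len_def tup_rank_def)
      from os have shifted:
        "realizes k os (ops_rank [IntercWith j [[], [], []]] r) (\<lambda>x. tinterc (Suc j) x vs)"
        using less.prems by (simp add: tup_rank_def)
      from realizes_append[OF shifted single]
      have "realizes k (os @ [IntercWith j [[], [], []]]) r (\<lambda>x. tinterc j x v)"
        by (rule realizes_cong)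
          (use less.prems vs1 in \<open>simp add: v \<open>w = []\<close> tinterc_tinterc_gap\<close>)
      then show ?thesis ..
    qed
  qed
qed

lemma ex_realizes_linear_term:
  "kcorrect k rh \<beta> \<Longrightarrow> nts \<beta> = [B] \<Longrightarrow> \<exists>os. realizes k os (rh B) (val_at \<beta>)"
proof (induction \<beta>)
  case (NT A)
  have "realizes k [] (rh B) (val_at (NT A))"
    by (rule realizes_cong[OF realizes_Nil]) simp
  then show ?case ..
next
  case (Conc a b)
  consider "nts a = [B]" "nts b = []" | "nts a = []" "nts b = [B]"
    using Conc.prems(2) by (auto simp: append_eq_Cons_conv)
  then show ?case
  proof cases
    case 1
    have len: "length x = Suc (rh B) \<Longrightarrow> length (val_at a x) = Suc (trank rh a)" for x
      using Conc.prems 1 length_val_at[of k rh a x] by simp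
    have "\<exists>os. realizes k os (trank rh a) (\<lambda>y. tconc y (val b))"
      using Conc.prems length_val[of k rh b] 1
      by (intro ex_realizes_tconc_right) (auto simp: tup_rank_def)
    from ex_realizes_comp[OF Conc.IH(1) len this]
    have "\<exists>os. realizes k os (rh B) (\<lambda>x. tconc (val_at a x) (val b))"
      using Conc.prems 1 by auto
    then show ?thesis
      by (rule ex_realizes_cong) (simp add: 1 val_at_ground)
  next
    case 2
    have len: "length x = Suc (rh B) \<Longrightarrow> length (val_at b x) = Suc (trank rh b)" for x
      using Conc.prems 2 length_val_at[of k rh b x] by simp
    have "\<exists>os. realizes k os (trank rh b) (tconc (val a))"
      using Conc.prems length_val[of k rh a] 2
      by (intro ex_realizes_tconc_left) (auto simp: tup_rank_def)
    from ex_realizes_comp[OF Conc.IH(2) len this]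
    have "\<exists>os. realizes k os (rh B) (\<lambda>x. tconc (val a) (val_at b x))"
      using Conc.prems 2 by auto
    then show ?thesis
      by (rule ex_realizes_cong) (simp add: 2 val_at_ground)
  qed
next
  case (Interc j a b)
  consider "nts a = [B]" "nts b = []" | "nts a = []" "nts b = [B]"
    using Interc.prems(2) by (auto simp: append_eq_Cons_conv)
  then show ?case
  proof cases
    case 1
    have len: "length x = Suc (rh B) \<Longrightarrow> length (val_at a x) = Suc (trank rh a)" for x
      using Interc.prems 1 length_val_at[of k rh a x] by simp
    have "length (val b) = Suc (trank rh b)"
      using Interc.prems 1 length_val[of k rh b] by simp
    then have "\<exists>os. realizes k os (trank rh a) (\<lambda>y. tinterc j y (val b))"
      using Interc.prems trank_le_if_kcorrect[of k rh a]
      by (intro ex_realizes_tinterc) (auto simp: tup_rank_def)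
    from ex_realizes_comp[OF Interc.IH(1) len this]
    have "\<exists>os. realizes k os (rh B) (\<lambda>x. tinterc j (val_at a x) (val b))"
      using Interc.prems 1 by auto
    then show ?thesis
      by (rule ex_realizes_cong) (simp add: 1 val_at_ground)
  next
    case 2
    have len: "length x = Suc (rh B) \<Longrightarrow> length (val_at b x) = Suc (trank rh b)" for x
      using Interc.prems 2 length_val_at[of k rh b x] by simp
    define g where "g = val a"
    have g: "length g = Suc (trank rh a)"
      using Interc.prems length_val[of k rh a] 2 by (simp add: g_def)
    have len_left: "length y = Suc (trank rh b) \<Longrightarrow>
        length (tconc (take j g) y) = Suc (j - 1 + trank rh b)" for y
      using Interc.prems g by (auto simp: length_tconc simp flip: length_greater_0_conv)
    have left: "\<exists>os. realizes k os (trank rh b) (tconc (take j g))"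
      using Interc.prems g by (intro ex_realizes_tconc_left) (auto simp: tup_rank_def)
    have right: "\<exists>os. realizes k os (j - 1 + trank rh b) (\<lambda>y. tconc y (drop j g))"
      using Interc.prems g by (intro ex_realizes_tconc_right) (auto simp: tup_rank_def)
    from ex_realizes_comp[OF left len_left right]
    have "\<exists>os. realizes k os (trank rh b) (\<lambda>y. tinterc j g y)"
      by (simp add: tinterc_def)
    from ex_realizes_comp[OF Interc.IH(2) len this]
    have "\<exists>os. realizes k os (rh B) (\<lambda>x. tinterc j g (val_at b x))"
      using Interc.prems 2 by auto
    then show ?thesis
      by (rule ex_realizes_cong) (simp add: 2 g_def val_at_ground)
  qed
qed auto

fun op_term :: "'t nf_op \<Rightarrow> 'm \<Rightarrow> ('m, 't) tm" where
  "op_term (ConcLeft u) N = Conc (Tup u) (NT N)"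
| "op_term (ConcRight u) N = Conc (NT N) (Tup u)"
| "op_term (IntercWith j u) N = Interc j (NT N) (Tup u)"
| "op_term (Const u) N = Tup u"

lemma op_term_wf:
  assumes "op_ok k p (rh N)"
  shows "kcorrect k rh (op_term p N)" "trank rh (op_term p N) = op_rank p (rh N)"
    "\<forall>u \<in> set (leaf_tuples (op_term p N)). tup_len u \<le> 1" "normal_rule (op_term p N)"
  using assms by (cases p; auto simp: normal_rule_def tup_rank_def)+

lemma nts_op_term: "nts (op_term p N) = (if is_Const p then [] else [N])"
  by (cases p) auto

lemma val_at_op_term: "\<not> is_Const p \<Longrightarrow> val_at (op_term p N) y = op_val p y"
  by (cases p) auto

lemma val_op_term: "is_Const p \<Longrightarrow> val (op_term p N) = op_val p y"
  by (cases p) auto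

section \<open>The normal-form grammar\<close>

datatype ('n, 't) chain_nt = Orig 'n | Chain "'n \<times> ('n, 't) tm" nat

locale linear_kDCFG =
  fixes k :: nat and G :: "('n, 't) dcfg"
  assumes kDCFG: "is_kDCFG k G" and linear: "linear_grammar G"
begin

lemma rule_wf:
  assumes "(A, \<beta>) \<in> Rules G"
  shows "A \<in> Nts G" "set (nts \<beta>) \<subseteq> Nts G" "kcorrect k (rk G) \<beta>" "rk G A = trank (rk G) \<beta>"
    "length (nts \<beta>) \<le> 1"
  using assms kDCFG linear by (auto simp: is_kDCFG_def linear_grammar_def)

lemma length_generates: "generates G A w \<Longrightarrow> length w = Suc (rk G A)"
proof (induction rule: generates.induct)
  case (terminal A \<beta>)
  then show ?case using rule_wf[OF terminal(1)] length_val by metis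
next
  case (unary A \<beta> B x)
  then show ?case using rule_wf[OF unary(1)] length_val_at[of k "rk G" \<beta> x] by auto
qed

text \<open>For a terminal rule the chain ends in a constant, which ignores its input, so the
  left-hand side serves as a dummy.\<close>
definition rhs_nt :: "'n \<times> ('n, 't) tm \<Rightarrow> 'n" where
  "rhs_nt r = (case nts (snd r) of [] \<Rightarrow> fst r | B # _ \<Rightarrow> B)"

definition is_chain :: "'n \<times> ('n, 't) tm \<Rightarrow> 't nf_op list \<Rightarrow> bool" where
  "is_chain r os \<longleftrightarrow>
     (if nts (snd r) = []
      then ops_ok k os (rk G (rhs_nt r)) \<and> os \<noteq> [] \<and> is_Const (last os) \<and>
           (\<forall>x. ops_val os x = val (snd r))
      else realizes k os (rk G (rhs_nt r)) (val_at (snd r)))"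

text \<open>A terminal rule becomes left concatenations with its value, followed by the constant
  \<open>\<epsilon>\<close>.\<close>
lemma ex_is_chain:
  assumes "r \<in> Rules G"
  shows "\<exists>os. is_chain r os"
proof (cases "nts (snd r)")
  case Nil
  have "kcorrect k (rk G) (snd r)"
    using rule_wf(3)[of "fst r" "snd r"] assms by simp
  then have len: "length (val (snd r)) = Suc (trank (rk G) (snd r))" and "trank (rk G) (snd r) \<le> k"
    using Nil length_val trank_le_if_kcorrect by auto
  then obtain os where os: "realizes k os 0 (tconc (val (snd r)))"
    using ex_realizes_tconc_left[of "val (snd r)" 0 k]
    by (auto simp: tup_rank_def simp flip: length_greater_0_conv)
  have "is_chain r (os @ [Const [[]]])"
    using os len Nil
    by (auto simp: is_chain_def realizes_def ops_ok_append tup_rank_def tup_len_def tconc_eps_right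
        simp flip: length_greater_0_conv)
  then show ?thesis ..
next
  case (Cons B l)
  then have "nts (snd r) = [B]"
    using rule_wf(5)[of "fst r" "snd r"] assms by simp
  then show ?thesis
    using ex_realizes_linear_term[of k "rk G" "snd r" B] rule_wf(3)[of "fst r" "snd r"] assms
    by (auto simp: is_chain_def rhs_nt_def)
qed

definition chain :: "'n \<times> ('n, 't) tm \<Rightarrow> 't nf_op list" where
  "chain r = (SOME os. is_chain r os)"

lemma is_chain_chain: "r \<in> Rules G \<Longrightarrow> is_chain r (chain r)"
  unfolding chain_def using ex_is_chain by (rule someI_ex)

lemma ops_ok_chain: "r \<in> Rules G \<Longrightarrow> ops_ok k (chain r) (rk G (rhs_nt r))"
  using is_chain_chain[of r] by (auto simp: is_chain_def realizes_def split: if_splits)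

lemma chain_terminal:
  "r \<in> Rules G \<Longrightarrow> nts (snd r) = [] \<Longrightarrow>
   chain r \<noteq> [] \<and> is_Const (last (chain r)) \<and> ops_val (chain r) x = val (snd r)"
  using is_chain_chain[of r] by (simp add: is_chain_def)

lemma chain_unary:
  assumes "r \<in> Rules G" "nts (snd r) = [B]"
  shows "\<forall>p \<in> set (chain r). \<not> is_Const p"
    "length x = Suc (rk G B) \<Longrightarrow> ops_val (chain r) x = val_at (snd r) x"
  using is_chain_chain[OF assms(1)] assms(2) by (auto simp: is_chain_def realizes_def rhs_nt_def)

lemma ops_rank_chain:
  assumes "r \<in> Rules G"
  shows "ops_rank (chain r) (rk G (rhs_nt r)) = rk G (fst r)"
proof -
  obtain A \<beta> where r: "r = (A, \<beta>)" by (cases r)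
  note wf = rule_wf[of A \<beta>, folded r, OF assms]
  let ?x = "replicate (Suc (rk G (rhs_nt r))) []"
  have "length (ops_val (chain r) ?x) = Suc (ops_rank (chain r) (rk G (rhs_nt r)))"
    using ops_ok_chain[OF assms] by (simp add: length_ops_val)
  moreover have "length (ops_val (chain r) ?x) = Suc (rk G A)"
  proof (cases "nts \<beta>")
    case Nil
    then show ?thesis
      using chain_terminal[OF assms] length_val wf r by simp
  next
    case (Cons B l)
    with wf(5) r have "nts \<beta> = [B]" by simp
    then show ?thesis
      using chain_unary(2)[OF assms] length_val_at[of k "rk G" \<beta>] wf r by (simp add: rhs_nt_def)
  qed
  ultimately show ?thesis
    using r by simp
qed

lemma generates_chain:
  assumes "r \<in> Rules G" "nts (snd r) \<noteq> [] \<Longrightarrow> generates G (rhs_nt r) x"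
  shows "generates G (fst r) (ops_val (chain r) x)"
proof -
  obtain A \<beta> where r: "r = (A, \<beta>)" by (cases r)
  consider "nts \<beta> = []" | B where "nts \<beta> = [B]"
    using rule_wf(5)[of A \<beta>] assms(1) r by (cases "nts \<beta>") auto
  then show ?thesis
  proof cases
    case 1
    then show ?thesis
      using generates.terminal[of A \<beta>] chain_terminal[of r] assms(1) r by simp
  next
    case 2
    then have "generates G B x"
      using assms(2) r by (simp add: rhs_nt_def)
    moreover have "ops_val (chain r) x = val_at \<beta> x"
      using chain_unary(2)[of r B x] length_generates[OF calculation] assms(1) r 2 by simp
    ultimately show ?thesis
      using generates.unary[of A \<beta> G B x] assms(1) r 2 by simp
  qed
qed

definition unit_pairs :: "('n \<times> 'n) set" where
  "unit_pairs = {(A, B). \<exists>\<beta>. (A, \<beta>) \<in> Rules G \<and> nts \<beta> = [B] \<and> chain (A, \<beta>) = []}"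

lemma rk_unit_pairs: "(A, B) \<in> unit_pairs\<^sup>* \<Longrightarrow> rk G A = rk G B"
proof (induction rule: rtrancl_induct)
  case (step B C)
  then obtain \<beta> where "(B, \<beta>) \<in> Rules G" "nts \<beta> = [C]" "chain (B, \<beta>) = []"
    by (auto simp: unit_pairs_def)
  then show ?case
    using step.IH ops_rank_chain[of "(B, \<beta>)"] by (simp add: rhs_nt_def)
qed simp

lemma generates_unit_pairs: "(A, B) \<in> unit_pairs\<^sup>* \<Longrightarrow> generates G B w \<Longrightarrow> generates G A w"
proof (induction rule: converse_rtrancl_induct)
  case (step A C)
  then obtain \<beta> where \<beta>: "(A, \<beta>) \<in> Rules G" "nts \<beta> = [C]" "chain (A, \<beta>) = []"
    by (auto simp: unit_pairs_def)
  then show ?case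
    using generates_chain[of "(A, \<beta>)" w] step by (simp add: rhs_nt_def)
qed simp

lemma Nts_unit_pairs: "(A, B) \<in> unit_pairs\<^sup>* \<Longrightarrow> B \<in> Nts G \<Longrightarrow> A \<in> Nts G"
  by (induction rule: converse_rtrancl_induct) (auto simp: unit_pairs_def dest: rule_wf(1))

definition link :: "'n \<times> ('n, 't) tm \<Rightarrow> nat \<Rightarrow> ('n, 't) chain_nt" where
  "link r i = (if Suc i = length (chain r) then Orig (rhs_nt r) else Chain r (Suc i))"

definition nf_rule :: "'n \<times> ('n, 't) tm \<Rightarrow> nat \<Rightarrow> (('n, 't) chain_nt, 't) tm" where
  "nf_rule r i = op_term (chain r ! i) (link r i)"

fun nf_rank :: "('n, 't) chain_nt \<Rightarrow> nat" where
  "nf_rank (Orig A) = rk G A"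
| "nf_rank (Chain r i) = ops_rank (drop i (chain r)) (rk G (rhs_nt r))"

definition chain_nts :: "('n, 't) chain_nt set" where
  "chain_nts = {Chain r i | r i. r \<in> Rules G \<and> 0 < i \<and> i < length (chain r)}"

text \<open>Each rule \<open>r\<close> of \<open>G\<close> becomes the chain \<open>Chain r i \<rightarrow> nf_rule r i\<close>; its head rule is
  attached to every nonterminal reaching \<open>fst r\<close> by rules with an empty chain, which
  eliminates those unit rules.\<close>
definition NF :: "(('n, 't) chain_nt, 't) dcfg" where
  "NF = \<lparr>Nts = Orig ` Nts G \<union> chain_nts,
         rk = nf_rank,
         Rules = {(Orig A, nf_rule r 0) | A r. r \<in> Rules G \<and> chain r \<noteq> [] \<and> (A, fst r) \<in> unit_pairs\<^sup>*}
           \<union> {(Chain r i, nf_rule r i) | r i. r \<in> Rules G \<and> 0 < i \<and> i < length (chain r)},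
         Start = Orig (Start G)\<rparr>"

lemma Start_NF: "Start NF = Orig (Start G)"
  by (simp add: NF_def)

lemma Rules_NF_cases:
  assumes "(N, \<alpha>) \<in> Rules NF"
  obtains (head) r A where "r \<in> Rules G" "chain r \<noteq> []" "(A, fst r) \<in> unit_pairs\<^sup>*"
      "N = Orig A" "\<alpha> = nf_rule r 0"
  | (link) r i where "r \<in> Rules G" "0 < i" "i < length (chain r)" "N = Chain r i" "\<alpha> = nf_rule r i"
  using assms unfolding NF_def by auto

lemma Rules_NF_nf_rule:
  assumes "(N, \<alpha>) \<in> Rules NF"
  obtains r i where "r \<in> Rules G" "i < length (chain r)" "\<alpha> = nf_rule r i"
  using assms by (cases rule: Rules_NF_cases) auto

lemma nf_rank_link:
  "i < length (chain r) \<Longrightarrow> nf_rank (link r i) = ops_rank (drop (Suc i) (chain r)) (rk G (rhs_nt r))"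
  by (auto simp: link_def)

lemma op_ok_nf_rule:
  "r \<in> Rules G \<Longrightarrow> i < length (chain r) \<Longrightarrow> op_ok k (chain r ! i) (nf_rank (link r i))"
  using ops_ok_nth[OF ops_ok_chain] by (simp add: nf_rank_link)

lemma link_Nts: "r \<in> Rules G \<Longrightarrow> i < length (chain r) \<Longrightarrow> link r i \<in> Nts NF"
proof -
  assume r: "r \<in> Rules G" "i < length (chain r)"
  have "rhs_nt r \<in> Nts G"
    using rule_wf(1,2)[of "fst r" "snd r"] r(1) by (auto simp: rhs_nt_def split: list.split)
  moreover have "Chain r (Suc i) \<in> chain_nts" if "Suc i \<noteq> length (chain r)"
    using r that unfolding chain_nts_def by force
  ultimately show ?thesis
    by (simp add: link_def NF_def)
qed

lemma finite_Rules_NF: "finite (Rules NF)"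
proof -
  have fin: "finite (Rules G)" "finite (Nts G)"
    using kDCFG by (auto simp: is_kDCFG_def)
  have "Rules NF \<subseteq> (\<lambda>(A, r). (Orig A, nf_rule r 0)) ` (Nts G \<times> Rules G)
      \<union> (\<lambda>(r, i). (Chain r i, nf_rule r i)) ` (SIGMA r:Rules G. {..<length (chain r)})"
    using Nts_unit_pairs rule_wf(1) by (fastforce simp: NF_def)
  then show ?thesis
    using fin by (auto intro: finite_subset)
qed

lemma nf_rule_wf:
  assumes "r \<in> Rules G" "i < length (chain r)"
  shows "set (nts (nf_rule r i)) \<subseteq> Nts NF" "kcorrect k nf_rank (nf_rule r i)"
    "trank nf_rank (nf_rule r i) = ops_rank (drop i (chain r)) (rk G (rhs_nt r))"
    "\<forall>u \<in> set (leaf_tuples (nf_rule r i)). tup_len u \<le> 1" "normal_rule (nf_rule r i)"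
  using op_term_wf[of k "chain r ! i" nf_rank "link r i", OF op_ok_nf_rule[OF assms]]
    link_Nts[OF assms] op_rank_nth_drop[OF assms(2)]
  by (auto simp: nf_rule_def nts_op_term nf_rank_link[OF assms(2)])

lemma Rules_NF_wf:
  assumes "(N, \<alpha>) \<in> Rules NF"
  shows "N \<in> Nts NF \<and> set (nts \<alpha>) \<subseteq> Nts NF \<and> kcorrect k nf_rank \<alpha> \<and>
    nf_rank N = trank nf_rank \<alpha> \<and> (\<forall>u \<in> set (leaf_tuples \<alpha>). tup_len u \<le> 1)"
  using assms
proof (cases rule: Rules_NF_cases)
  case (head r A)
  have "A \<in> Nts G"
    using Nts_unit_pairs[OF head(3)] rule_wf(1)[of "fst r" "snd r"] head(1) by simp
  moreover have "rk G A = ops_rank (chain r) (rk G (rhs_nt r))"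
    using rk_unit_pairs[OF head(3)] ops_rank_chain[OF head(1)] by simp
  ultimately show ?thesis
    using head nf_rule_wf[OF head(1), of 0] by (auto simp: NF_def)
next
  case (link r i)
  then have "Chain r i \<in> chain_nts"
    unfolding chain_nts_def by blast
  then show ?thesis
    using link nf_rule_wf[OF link(1,3)] by (auto simp: NF_def)
qed

lemma NF_kDCFG: "is_kDCFG k NF"
  unfolding is_kDCFG_def
proof (intro conjI)
  have "chain_nts \<subseteq> (\<lambda>(r, i). Chain r i) ` (SIGMA r:Rules G. {..<length (chain r)})"
    by (auto simp: chain_nts_def)
  then show "finite (Nts NF)"
    using kDCFG by (auto simp: NF_def is_kDCFG_def intro: finite_subset)
  show "Start NF \<in> Nts NF" "rk NF (Start NF) = 0"
    using kDCFG by (auto simp: NF_def is_kDCFG_def)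
  show "finite (Rules NF)"
    by (rule finite_Rules_NF)
  have "rk NF = nf_rank"
    by (simp add: NF_def)
  then show "\<forall>(A, \<alpha>) \<in> Rules NF. A \<in> Nts NF \<and> set (nts \<alpha>) \<subseteq> Nts NF \<and>
      kcorrect k (rk NF) \<alpha> \<and> rk NF A = trank (rk NF) \<alpha> \<and> (\<forall>u\<in>set (leaf_tuples \<alpha>). tup_len u \<le> 1)"
    using Rules_NF_wf by auto
qed

lemma NF_normal_form: "normal_form NF"
  using nf_rule_wf(5) by (auto simp: normal_form_def elim!: Rules_NF_nf_rule)

lemma NF_linear: "linear_grammar NF"
  by (auto simp: linear_grammar_def nf_rule_def nts_op_term elim!: Rules_NF_nf_rule)

lemma generates_NF_chain:
  assumes r: "r \<in> Rules G" "chain r \<noteq> []" "(A, fst r) \<in> unit_pairs\<^sup>*"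
    and x: "nts (snd r) \<noteq> [] \<Longrightarrow> generates NF (Orig (rhs_nt r)) x"
  shows "generates NF (Orig A) (ops_val (chain r) x)"
proof -
  have "generates NF (if i = 0 then Orig A else Chain r i) (ops_val (drop i (chain r)) x)"
    if "i < length (chain r)" for i
    using that
  proof (induction "length (chain r) - i" arbitrary: i)
    case 0
    then show ?case by simp
  next
    case (Suc n)
    have rule: "(if i = 0 then Orig A else Chain r i, nf_rule r i) \<in> Rules NF"
      using r Suc.prems by (cases r) (auto simp: NF_def)
    show ?case
    proof (cases "is_Const (chain r ! i)")
      case True
      then have "nts (nf_rule r i) = []" "val (nf_rule r i) = ops_val (drop i (chain r)) x"
        using op_val_nth_drop[OF Suc.prems, of x, symmetric]
        by (simp_all add: nf_rule_def nts_op_term val_op_term)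
      then show ?thesis
        using generates.terminal[OF rule] by simp
    next
      case False
      have "generates NF (link r i) (ops_val (drop (Suc i) (chain r)) x)"
      proof (cases "Suc i = length (chain r)")
        case True
        then have "chain r ! i = last (chain r)"
          using r(2) by (simp add: last_conv_nth flip: True)
        then have "nts (snd r) \<noteq> []"
          using chain_terminal[OF r(1)] False by auto
        then show ?thesis
          using x True by (simp add: link_def)
      next
        case False
        then show ?thesis
          using Suc.hyps(1)[of "Suc i"] Suc.hyps(2) Suc.prems by (simp add: link_def)
      qed
      moreover have "nts (nf_rule r i) = [link r i]"
        "val_at (nf_rule r i) (ops_val (drop (Suc i) (chain r)) x) = ops_val (drop i (chain r)) x"
        using False op_val_nth_drop[OF Suc.prems, of x]
        by (simp_all add: nf_rule_def nts_op_term val_at_op_term)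
      ultimately show ?thesis
        using generates.unary[OF rule] by metis
    qed
  qed
  from this[of 0] show ?thesis
    using r(2) by simp
qed

lemma generates_NF_Orig: "generates G B w \<Longrightarrow> (A, B) \<in> unit_pairs\<^sup>* \<Longrightarrow> generates NF (Orig A) w"
proof (induction arbitrary: A rule: generates.induct)
  case (terminal B \<beta>)
  then show ?case
    using generates_NF_chain[of "(B, \<beta>)" A] chain_terminal[of "(B, \<beta>)"] by simp
next
  case (unary B \<beta> C x)
  have chain: "ops_val (chain (B, \<beta>)) x = val_at \<beta> x"
    using chain_unary(2)[of "(B, \<beta>)" C x] length_generates[OF unary(3)] unary(1,2) by simp
  show ?case
  proof (cases "chain (B, \<beta>) = []")
    case True
    then have "(A, C) \<in> unit_pairs\<^sup>*"
      using unary(1,2,5) by (auto simp: unit_pairs_def intro: rtrancl_into_rtrancl)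
    then show ?thesis
      using unary.IH chain True by simp
  next
    case False
    then show ?thesis
      using generates_NF_chain[of "(B, \<beta>)" A x] unary chain by (simp add: rhs_nt_def)
  qed
qed

text \<open>What \<open>Chain r i\<close> generates; the invariant of the soundness proof.\<close>
definition chain_sem :: "'n \<times> ('n, 't) tm \<Rightarrow> nat \<Rightarrow> 't tuple \<Rightarrow> bool" where
  "chain_sem r i w \<longleftrightarrow>
     (\<exists>x. (nts (snd r) \<noteq> [] \<longrightarrow> generates G (rhs_nt r) x) \<and> w = ops_val (drop i (chain r)) x)"

fun nf_sem :: "('n, 't) chain_nt \<Rightarrow> 't tuple \<Rightarrow> bool" where
  "nf_sem (Orig A) w = generates G A w"
| "nf_sem (Chain r i) w = chain_sem r i w"

lemma chain_sem_link:
  assumes "i < length (chain r)" "nf_sem (link r i) y"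
  shows "chain_sem r (Suc i) y"
proof (cases "Suc i = length (chain r)")
  case True
  then show ?thesis
    using assms(2) by (auto simp: link_def chain_sem_def intro!: exI[of _ y])
next
  case False
  then show ?thesis
    using assms(2) by (simp add: link_def)
qed

lemma nf_sem_Rules_NF:
  assumes "(N, \<alpha>) \<in> Rules NF"
    and "\<And>r i. r \<in> Rules G \<Longrightarrow> i < length (chain r) \<Longrightarrow> \<alpha> = nf_rule r i \<Longrightarrow> chain_sem r i w"
  shows "nf_sem N w"
  using assms(1)
proof (cases rule: Rules_NF_cases)
  case (head r A)
  then obtain x where x: "nts (snd r) \<noteq> [] \<longrightarrow> generates G (rhs_nt r) x" "w = ops_val (chain r) x"
    using assms(2)[of r 0] by (auto simp: chain_sem_def)
  then have "generates G (fst r) w"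
    using generates_chain[OF head(1)] by simp
  then show ?thesis
    using generates_unit_pairs[OF head(3)] head(4) by simp
next
  case (link r i)
  then show ?thesis
    using assms(2) by simp
qed

lemma nf_sem_if_generates_NF: "generates NF N w \<Longrightarrow> nf_sem N w"
proof (induction rule: generates.induct)
  case (terminal N \<alpha>)
  show ?case
  proof (rule nf_sem_Rules_NF[OF terminal(1)])
    fix r i assume r: "r \<in> Rules G" "i < length (chain r)" "\<alpha> = nf_rule r i"
    then have "is_Const (chain r ! i)"
      using terminal(2) by (simp add: nf_rule_def nts_op_term split: if_splits)
    then have "nts (snd r) = []"
      using chain_unary(1)[OF r(1)] rule_wf(5)[of "fst r" "snd r"] r(1,2)
      by (cases "nts (snd r)") (auto simp: nth_mem)
    moreover have "val \<alpha> = ops_val (drop i (chain r)) x" for x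
      using r \<open>is_Const (chain r ! i)\<close> op_val_nth_drop[OF r(2), of x, symmetric]
      by (simp add: nf_rule_def val_op_term)
    ultimately show "chain_sem r i (val \<alpha>)"
      by (auto simp: chain_sem_def)
  qed
next
  case (unary N \<alpha> M y)
  show ?case
  proof (rule nf_sem_Rules_NF[OF unary(1)])
    fix r i assume r: "r \<in> Rules G" "i < length (chain r)" "\<alpha> = nf_rule r i"
    then have "\<not> is_Const (chain r ! i)" "M = link r i"
      using unary(2) by (simp_all add: nf_rule_def nts_op_term split: if_splits)
    moreover obtain x where "nts (snd r) \<noteq> [] \<longrightarrow> generates G (rhs_nt r) x"
      "y = ops_val (drop (Suc i) (chain r)) x"
      using chain_sem_link[OF r(2)] unary.IH calculation(2) by (auto simp: chain_sem_def)
    ultimately show "chain_sem r i (val_at \<alpha> y)"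
      using r op_val_nth_drop[OF r(2), of x]
      by (auto simp: chain_sem_def nf_rule_def val_at_op_term)
  qed
qed

lemma lang_NF: "lang NF = lang G"
proof -
  have "generates NF (Orig (Start G)) w \<longleftrightarrow> generates G (Start G) w" for w
    using generates_NF_Orig[of "Start G" w "Start G"] nf_sem_if_generates_NF[of "Orig (Start G)" w]
    by auto
  then show ?thesis
    unfolding lang_def LG_linear[OF linear] LG_linear[OF NF_linear] Start_NF by (simp add: set_eq_iff)
qed

end

section \<open>Renaming nonterminals\<close>

definition rename_nts :: "('a \<Rightarrow> 'b) \<Rightarrow> ('a, 't) dcfg \<Rightarrow> ('b, 't) dcfg" where
  "rename_nts f G = \<lparr>Nts = f ` Nts G, rk = (\<lambda>B. rk G (inv_into (Nts G) f B)),
     Rules = (\<lambda>(A, \<alpha>). (f A, map_tm f id \<alpha>)) ` Rules G, Start = f (Start G)\<rparr>"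

lemma nts_map_tm: "nts (map_tm f id \<alpha>) = map f (nts \<alpha>)"
  by (induction \<alpha>) auto

lemma leaf_tuples_map_tm: "leaf_tuples (map_tm f id \<alpha>) = leaf_tuples \<alpha>"
  by (induction \<alpha>) (auto simp: list.map_id)

lemma val_at_map_tm: "val_at (map_tm f id \<alpha>) x = val_at \<alpha> x"
  by (induction \<alpha>) (auto simp: list.map_id)

lemma val_map_tm: "val (map_tm f id \<alpha>) = val \<alpha>"
  by (induction \<alpha>) (auto simp: list.map_id)

lemma trank_map_tm:
  "\<forall>B \<in> set (nts \<alpha>). rh' (f B) = rh B \<Longrightarrow> trank rh' (map_tm f id \<alpha>) = trank rh \<alpha>"
  by (induction \<alpha>) (auto simp: list.map_id)

lemma kcorrect_map_tm:
  "\<forall>B \<in> set (nts \<alpha>). rh' (f B) = rh B \<Longrightarrow> kcorrect k rh' (map_tm f id \<alpha>) = kcorrect k rh \<alpha>"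
  by (induction \<alpha>) (auto simp: list.map_id ball_Un trank_map_tm[where rh = rh])

lemma normal_rule_map_tm: "normal_rule \<alpha> \<Longrightarrow> normal_rule (map_tm f id \<alpha>)"
  by (auto simp: normal_rule_def list.map_id)

context
  fixes k :: nat and G :: "('a, 't) dcfg" and f :: "'a \<Rightarrow> 'b"
  assumes kDCFG: "is_kDCFG k G" and inj: "inj_on f (Nts G)"
begin

lemma rk_rename_nts: "A \<in> Nts G \<Longrightarrow> rk (rename_nts f G) (f A) = rk G A"
  using inj by (simp add: rename_nts_def inv_into_f_f)

lemma Rules_rename_nts_wf:
  assumes "(A, \<alpha>) \<in> Rules G"
  shows "A \<in> Nts G" "set (nts \<alpha>) \<subseteq> Nts G" "kcorrect k (rk (rename_nts f G)) (map_tm f id \<alpha>)"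
    "rk (rename_nts f G) (f A) = trank (rk (rename_nts f G)) (map_tm f id \<alpha>)"
    "\<forall>u \<in> set (leaf_tuples \<alpha>). tup_len u \<le> 1"
proof -
  show nts: "A \<in> Nts G" "set (nts \<alpha>) \<subseteq> Nts G" and "\<forall>u \<in> set (leaf_tuples \<alpha>). tup_len u \<le> 1"
    using assms kDCFG by (auto simp: is_kDCFG_def)
  have "\<forall>B \<in> set (nts \<alpha>). rk (rename_nts f G) (f B) = rk G B"
    using nts rk_rename_nts by auto
  then show "kcorrect k (rk (rename_nts f G)) (map_tm f id \<alpha>)"
    "rk (rename_nts f G) (f A) = trank (rk (rename_nts f G)) (map_tm f id \<alpha>)"
    using assms kDCFG rk_rename_nts[OF nts(1)]
    by (auto simp: kcorrect_map_tm[where rh = "rk G"] trank_map_tm[where rh = "rk G"] is_kDCFG_def)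
qed

lemma rename_nts_kDCFG: "is_kDCFG k (rename_nts f G)"
  using kDCFG Rules_rename_nts_wf rk_rename_nts[of "Start G"]
  by (fastforce simp: is_kDCFG_def rename_nts_def nts_map_tm leaf_tuples_map_tm)

lemma rename_nts_normal_form: "normal_form G \<Longrightarrow> normal_form (rename_nts f G)"
  by (auto simp: normal_form_def rename_nts_def normal_rule_map_tm)

lemma rename_nts_linear: "linear_grammar G \<Longrightarrow> linear_grammar (rename_nts f G)"
  by (auto simp: linear_grammar_def rename_nts_def nts_map_tm)

lemma generates_rename_nts: "generates G A w \<Longrightarrow> generates (rename_nts f G) (f A) w"
proof (induction rule: generates.induct)
  case (terminal A \<beta>)
  then have "(f A, map_tm f id \<beta>) \<in> Rules (rename_nts f G)"
    by (force simp: rename_nts_def)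
  then show ?case
    using generates.terminal terminal(2) by (fastforce simp: nts_map_tm val_map_tm)
next
  case (unary A \<beta> B x)
  then have "(f A, map_tm f id \<beta>) \<in> Rules (rename_nts f G)"
    by (force simp: rename_nts_def)
  then show ?case
    using generates.unary unary(2,4) by (fastforce simp: nts_map_tm val_at_map_tm)
qed

lemma generates_rename_nts_inv:
  "generates (rename_nts f G) N w \<Longrightarrow> A \<in> Nts G \<Longrightarrow> N = f A \<Longrightarrow> generates G A w"
proof (induction arbitrary: A rule: generates.induct)
  case (terminal N \<alpha>')
  then obtain A' \<alpha> where \<alpha>: "(A', \<alpha>) \<in> Rules G" "N = f A'" "\<alpha>' = map_tm f id \<alpha>"
    by (auto simp: rename_nts_def)
  then have "A' = A"
    using terminal(3,4) Rules_rename_nts_wf(1) inj by (auto simp: inj_on_def)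
  then show ?case
    using generates.terminal[OF \<alpha>(1)] \<alpha>(3) terminal(2) by (simp add: nts_map_tm val_map_tm)
next
  case (unary N \<alpha>' M x)
  then obtain A' \<alpha> where \<alpha>: "(A', \<alpha>) \<in> Rules G" "N = f A'" "\<alpha>' = map_tm f id \<alpha>"
    by (auto simp: rename_nts_def)
  then have "A' = A"
    using unary(5,6) Rules_rename_nts_wf(1) inj by (auto simp: inj_on_def)
  obtain B where B: "nts \<alpha> = [B]" "M = f B"
    using unary(2) \<alpha>(3) by (auto simp: nts_map_tm)
  then have "generates G B x"
    using unary.IH Rules_rename_nts_wf(2)[OF \<alpha>(1)] by simp
  then show ?case
    using generates.unary[OF \<alpha>(1) B(1)] \<alpha>(3) \<open>A' = A\<close> by (simp add: val_at_map_tm)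
qed

lemma lang_rename_nts: "linear_grammar G \<Longrightarrow> lang (rename_nts f G) = lang G"
proof -
  assume lin: "linear_grammar G"
  have "Start G \<in> Nts G"
    using kDCFG by (simp add: is_kDCFG_def)
  then have "generates (rename_nts f G) (f (Start G)) w \<longleftrightarrow> generates G (Start G) w" for w
    using generates_rename_nts generates_rename_nts_inv by blast
  then show ?thesis
    unfolding lang_def LG_linear[OF lin] LG_linear[OF rename_nts_linear[OF lin]]
    by (simp add: rename_nts_def set_eq_iff)
qed

end

theorem lemma1:
  fixes k :: nat and G :: "('n, 't::finite) dcfg"
  assumes "is_kDCFG k G" and "linear_grammar G"
  shows "\<exists>G' :: (nat, 't) dcfg. is_kDCFG k G' \<and> normal_form G' \<and> lang G' = lang G"
proof -
  interpret linear_kDCFG k G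
    using assms by unfold_locales
  have "finite (Nts NF)"
    using NF_kDCFG by (simp add: is_kDCFG_def)
  then obtain f :: "_ \<Rightarrow> nat" where f: "inj_on f (Nts NF)"
    using finite_imp_inj_to_nat_seg by blast
  show ?thesis
    using rename_nts_kDCFG[OF NF_kDCFG f] rename_nts_normal_form[OF NF_kDCFG f NF_normal_form]
      lang_rename_nts[OF NF_kDCFG f NF_linear] lang_NF
    by auto
qed

end
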